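(* For every graph $G$ and every positive integer $t$, $\partial\Gamma(G)\ge t$ if and only if $G$ contains an induced subgraph which is a minimal pG-$t$-atom.
   Context: A proper $k$-coloring of $G$ is a surjective map $c:V(G)\to\{1,\ldots,k\}$ with $c(u)\ne c(v)$ for every edge $uv$. A vertex of color $i$ is a Grundy vertex if it has, for every $j<i$, a neighbor of color $j$. A partial Grundy $k$-coloring is a proper $k$-coloring in which every color class contains at least one Grundy vertex; $\partial\Gamma(G)$ is the largest $k$ such that $G$ has a partial Grundy $k$-coloring. A pG-$t$-atom is a graph $A$ whose vertex set can be partitioned into $t$ sets $D_1,\ldots,D_t$, where each $D_i$ contains a special vertex $c_i$, such that: each $D_i$ is an independent set with $|D_i|\le t-i+1$; and for all $i\in\{2,\ldots,t\}$, $c_i$ has a neighbor in each of $D_1,\ldots,D_{i-1}$. A pG-$t$-atom is minimal if no proper induced subgraph of it is a pG-$t$-atom. *)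

theory Defs
  imports Main
begin

definition simple_graph :: "'a set \<Rightarrow> ('a \<Rightarrow> 'a \<Rightarrow> bool) \<Rightarrow> bool" where
  "simple_graph V E \<longleftrightarrow> finite V \<and> (\<forall>u v. E u v \<longrightarrow> u \<in> V \<and> v \<in> V)
     \<and> (\<forall>u v. E u v \<longrightarrow> E v u) \<and> (\<forall>v. \<not> E v v)"

definition proper_coloring :: "'a set \<Rightarrow> ('a \<Rightarrow> 'a \<Rightarrow> bool) \<Rightarrow> ('a \<Rightarrow> nat) \<Rightarrow> nat \<Rightarrow> bool" where
  "proper_coloring V E c k \<longleftrightarrow> c ` V = {1..k} \<and> (\<forall>u\<in>V. \<forall>v\<in>V. E u v \<longrightarrow> c u \<noteq> c v)"

definition grundy_vertex :: "'a set \<Rightarrow> ('a \<Rightarrow> 'a \<Rightarrow> bool) \<Rightarrow> ('a \<Rightarrow> nat) \<Rightarrow> 'a \<Rightarrow> bool" where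
  "grundy_vertex V E c v \<longleftrightarrow> (\<forall>j. 1 \<le> j \<and> j < c v \<longrightarrow> (\<exists>u\<in>V. E v u \<and> c u = j))"

definition partial_grundy_coloring :: "'a set \<Rightarrow> ('a \<Rightarrow> 'a \<Rightarrow> bool) \<Rightarrow> ('a \<Rightarrow> nat) \<Rightarrow> nat \<Rightarrow> bool" where
  "partial_grundy_coloring V E c k \<longleftrightarrow> proper_coloring V E c k
     \<and> (\<forall>i\<in>{1..k}. \<exists>v\<in>V. c v = i \<and> grundy_vertex V E c v)"

definition partial_grundy_number :: "'a set \<Rightarrow> ('a \<Rightarrow> 'a \<Rightarrow> bool) \<Rightarrow> nat" where
  "partial_grundy_number V E = Max {k. \<exists>c. partial_grundy_coloring V E c k}"

text \<open>The induced subgraph of (V,E) on S is (S, E restricted to S); every condition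
below only inspects edges between vertices of S.  pG-t-atom on vertex set S:
a partition of S into D_1..D_t with special vertices c_i.\<close>
definition pG_atom :: "'a set \<Rightarrow> ('a \<Rightarrow> 'a \<Rightarrow> bool) \<Rightarrow> nat \<Rightarrow> bool" where
  "pG_atom S E t \<longleftrightarrow> (\<exists>(D :: nat \<Rightarrow> 'a set) (c :: nat \<Rightarrow> 'a).
     (\<Union>i\<in>{1..t}. D i) = S
     \<and> (\<forall>i\<in>{1..t}. \<forall>j\<in>{1..t}. i \<noteq> j \<longrightarrow> D i \<inter> D j = {})
     \<and> (\<forall>i\<in>{1..t}. c i \<in> D i)
     \<and> (\<forall>i\<in>{1..t}. \<forall>x\<in>D i. \<forall>y\<in>D i. \<not> E x y)
     \<and> (\<forall>i\<in>{1..t}. card (D i) \<le> t - i + 1)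
     \<and> (\<forall>i\<in>{2..t}. \<forall>j\<in>{1..<i}. \<exists>x\<in>D j. E (c i) x))"

definition minimal_pG_atom :: "'a set \<Rightarrow> ('a \<Rightarrow> 'a \<Rightarrow> bool) \<Rightarrow> nat \<Rightarrow> bool" where
  "minimal_pG_atom S E t \<longleftrightarrow> pG_atom S E t \<and> (\<forall>S'. S' \<subset> S \<longrightarrow> \<not> pG_atom S' E t)"

end

theory Submission
  imports Defs
begin

text \<open>A partial Grundy t-coloring yields an atom: from the Grundy vertex of each class i take,
  for every higher class j, one neighbour of colour i of the Grundy vertex of class j; class i of
  the atom then has at most t - i + 1 vertices.  Conversely, the partition of an atom is itself a
  partial Grundy t-coloring of the atom, and first-fit colouring the remaining vertices one at a
  time never destroys a Grundy vertex and never lowers the number of colours.  Minimality is free,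
  since atoms live on finite vertex sets.\<close>

lemma least_missing_colour:
  fixes N :: "nat set"
  assumes "finite N"
  defines "j \<equiv> LEAST j. 1 \<le> j \<and> j \<notin> N"
  shows "1 \<le> j" and "j \<notin> N" and "\<And>i. 1 \<le> i \<Longrightarrow> i < j \<Longrightarrow> i \<in> N"
proof -
  have "\<exists>j. 1 \<le> j \<and> j \<notin> N"
  proof (intro exI conjI)
    show "Suc (Max (insert 0 N)) \<notin> N"
      using assms by (meson Max_ge finite_insert insertCI Suc_n_not_le_n)
  qed simp
  then have "1 \<le> j \<and> j \<notin> N" unfolding j_def by (rule LeastI_ex)
  then show "1 \<le> j" "j \<notin> N" by auto
  show "\<And>i. 1 \<le> i \<Longrightarrow> i < j \<Longrightarrow> i \<in> N" unfolding j_def using not_less_Least by blast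
qed

lemma grundy_vertex_extend:
  assumes "grundy_vertex W E c v" "W \<subseteq> W'" "\<forall>u\<in>W. c' u = c u" "v \<in> W"
  shows "grundy_vertex W' E c' v"
  using assms unfolding grundy_vertex_def by (metis subsetD)

lemma partial_grundy_coloring_insert:
  assumes sym: "symp E" and irrefl: "irreflp E"
    and pg: "partial_grundy_coloring W E c k" and x: "x \<notin> W"
  shows "\<exists>k'\<ge>k. \<exists>c'. partial_grundy_coloring (insert x W) E c' k'"
proof -
  have img: "c ` W = {1..k}" and proper: "\<forall>u\<in>W. \<forall>v\<in>W. E u v \<longrightarrow> c u \<noteq> c v"
    and grundy: "\<forall>i\<in>{1..k}. \<exists>v\<in>W. c v = i \<and> grundy_vertex W E c v"
    using pg unfolding partial_grundy_coloring_def proper_coloring_def by auto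
  define N where "N = c ` {u\<in>W. E x u}"
  define j where "j = (LEAST j. 1 \<le> j \<and> j \<notin> N)"
  have "N \<subseteq> {1..k}" using img N_def by auto
  then have "finite N" using finite_subset by blast
  note j = least_missing_colour[OF this, folded j_def]
  have "j \<le> k + 1"
  proof (rule ccontr)
    assume "\<not> j \<le> k + 1"
    then have "k + 1 \<in> N" using j(3) by simp
    then show False using \<open>N \<subseteq> {1..k}\<close> by auto
  qed
  define c' where "c' = c(x := j)"
  have agree: "\<forall>u\<in>W. c' u = c u" using x c'_def by auto
  have c'_x: "c' x = j" by (simp add: c'_def)
  have nbr: "c' y \<in> N" if "y \<in> W" "E x y" for y
    using that agree unfolding N_def by auto
  have "c' u \<noteq> c' v" if "u \<in> insert x W" "v \<in> insert x W" "E u v" for u v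
  proof (cases "u = x \<or> v = x")
    case True
    then show ?thesis
      using that nbr c'_x j(2) irreflpD[OF irrefl] sympD[OF sym] by (metis insert_iff)
  next
    case False
    then show ?thesis using that proper agree by auto
  qed
  moreover have "c' ` insert x W = {1..max k j}"
  proof -
    have "c' ` insert x W = insert j {1..k}" using agree img c'_x by (auto simp: image_iff)
    then show ?thesis using j(1) \<open>j \<le> k + 1\<close> by (auto simp: max_def)
  qed
  moreover have "\<forall>i\<in>{1..max k j}. \<exists>v\<in>insert x W. c' v = i \<and> grundy_vertex (insert x W) E c' v"
  proof
    fix i assume "i \<in> {1..max k j}"
    then have "i \<in> {1..k} \<or> i = j" using \<open>j \<le> k + 1\<close> by auto
    moreover have "grundy_vertex (insert x W) E c' x"
      unfolding grundy_vertex_def using j(3) agree c'_x unfolding N_def by fastforce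
    ultimately show "\<exists>v\<in>insert x W. c' v = i \<and> grundy_vertex (insert x W) E c' v"
      using grundy grundy_vertex_extend[OF _ subset_insertI agree] agree c'_x by fastforce
  qed
  ultimately have "partial_grundy_coloring (insert x W) E c' (max k j)"
    unfolding partial_grundy_coloring_def proper_coloring_def by blast
  then show ?thesis by (intro exI[of _ "max k j"]) auto
qed

lemma partial_grundy_coloring_Un:
  assumes sym: "symp E" and irrefl: "irreflp E"
    and "finite A" and "partial_grundy_coloring W E c k"
  shows "\<exists>k'\<ge>k. \<exists>c'. partial_grundy_coloring (W \<union> A) E c' k'"
  using assms(3)
proof (induction A rule: finite_induct)
  case empty
  then show ?case using assms(4) by auto
next
  case (insert x A)
  then obtain k1 c1 where k1: "k1 \<ge> k" "partial_grundy_coloring (W \<union> A) E c1 k1" by auto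
  show ?case
  proof (cases "x \<in> W \<union> A")
    case True
    then show ?thesis using k1 by (auto simp: insert_absorb)
  next
    case False
    then show ?thesis
      using partial_grundy_coloring_insert[OF sym irrefl k1(2) False] k1(1) by (auto intro: le_trans)
  qed
qed

lemma simple_graph_symp_irreflp:
  assumes "simple_graph V E"
  shows "symp E" and "irreflp E"
  using assms unfolding simple_graph_def by (auto intro: sympI irreflpI)

lemma partial_grundy_coloring_empty: "partial_grundy_coloring {} E c 0"
  unfolding partial_grundy_coloring_def proper_coloring_def by auto

lemma le_partial_grundy_number_iff:
  assumes "simple_graph V E"
  shows "t \<le> partial_grundy_number V E \<longleftrightarrow> (\<exists>k\<ge>t. \<exists>c. partial_grundy_coloring V E c k)"
proof -
  have fin: "finite V" using assms unfolding simple_graph_def by auto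
  define K where "K = {k. \<exists>c. partial_grundy_coloring V E c k}"
  have "K \<subseteq> {..card V}"
  proof
    fix k assume "k \<in> K"
    then obtain c where "c ` V = {1..k}"
      unfolding K_def partial_grundy_coloring_def proper_coloring_def by auto
    then show "k \<in> {..card V}" using card_image_le[OF fin, of c] by simp
  qed
  then have "finite K" using finite_subset by blast
  moreover have "K \<noteq> {}"
    using partial_grundy_coloring_Un[OF simple_graph_symp_irreflp[OF assms] fin partial_grundy_coloring_empty]
    unfolding K_def by auto
  ultimately have "t \<le> Max K \<longleftrightarrow> (\<exists>k\<in>K. t \<le> k)" by (rule Max_ge_iff)
  then show ?thesis unfolding partial_grundy_number_def K_def by auto
qed

lemma partition_index:
  assumes "\<forall>i\<in>I. \<forall>j\<in>I. i \<noteq> j \<longrightarrow> D i \<inter> D j = {}"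
  obtains f where "\<And>i x. i \<in> I \<Longrightarrow> x \<in> D i \<Longrightarrow> f x = i"
proof
  fix i x assume "i \<in> I" "x \<in> D i"
  then have "(SOME i. i \<in> I \<and> x \<in> D i) \<in> I \<and> x \<in> D (SOME i. i \<in> I \<and> x \<in> D i)"
    by (intro someI) auto
  then show "(SOME i. i \<in> I \<and> x \<in> D i) = i" using assms \<open>i \<in> I\<close> \<open>x \<in> D i\<close> by blast
qed

lemma pG_atom_partial_grundy_coloring:
  assumes "pG_atom S E t"
  shows "\<exists>c. partial_grundy_coloring S E c t"
proof -
  obtain D g where cover: "(\<Union>i\<in>{1..t}. D i) = S"
    and disjoint: "\<forall>i\<in>{1..t}. \<forall>j\<in>{1..t}. i \<noteq> j \<longrightarrow> D i \<inter> D j = {}"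
    and special: "\<forall>i\<in>{1..t}. g i \<in> D i"
    and indep: "\<forall>i\<in>{1..t}. \<forall>x\<in>D i. \<forall>y\<in>D i. \<not> E x y"
    and adj: "\<forall>i\<in>{2..t}. \<forall>j\<in>{1..<i}. \<exists>x\<in>D j. E (g i) x"
    using assms unfolding pG_atom_def by blast
  obtain col where col: "\<And>i x. i \<in> {1..t} \<Longrightarrow> x \<in> D i \<Longrightarrow> col x = i"
    using partition_index[OF disjoint] by blast
  have col_S: "col x \<in> {1..t} \<and> x \<in> D (col x)" if "x \<in> S" for x
    using that cover col by auto
  have g: "g i \<in> S \<and> col (g i) = i" if "i \<in> {1..t}" for i
    using that special cover col by auto
  have "col ` S = {1..t}"
  proof
    show "{1..t} \<subseteq> col ` S" using g by (metis imageI subsetI)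
  qed (use col_S in auto)
  moreover have "col u \<noteq> col v" if "u \<in> S" "v \<in> S" "E u v" for u v
    using that col_S indep by metis
  moreover have "grundy_vertex S E col (g i)" if "i \<in> {1..t}" for i
    unfolding grundy_vertex_def
  proof (intro allI impI)
    fix j assume "1 \<le> j \<and> j < col (g i)"
    then have "i \<in> {2..t}" "j \<in> {1..<i}" using that g by auto
    then obtain y where "y \<in> D j" "E (g i) y" using adj by blast
    then show "\<exists>u\<in>S. E (g i) u \<and> col u = j"
      using col cover \<open>j \<in> {1..<i}\<close> \<open>i \<in> {2..t}\<close> by auto
  qed
  ultimately show ?thesis
    unfolding partial_grundy_coloring_def proper_coloring_def using g by metis
qed

lemma partial_grundy_coloring_witnesses:
  assumes "partial_grundy_coloring V E c k"
  obtains g n where "\<And>i. i \<in> {1..k} \<Longrightarrow> g i \<in> V \<and> c (g i) = i"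
    and "\<And>i j. j \<in> {1..k} \<Longrightarrow> i \<in> {1..<j} \<Longrightarrow> n j i \<in> V \<and> E (g j) (n j i) \<and> c (n j i) = i"
proof -
  have "\<forall>i\<in>{1..k}. \<exists>v. v \<in> V \<and> c v = i \<and> grundy_vertex V E c v"
    using assms unfolding partial_grundy_coloring_def by blast
  from bchoice[OF this] obtain g
    where g: "\<forall>i\<in>{1..k}. g i \<in> V \<and> c (g i) = i \<and> grundy_vertex V E c (g i)"
    by blast
  have "\<forall>j\<in>{1..k}. \<exists>f. \<forall>i\<in>{1..<j}. f i \<in> V \<and> E (g j) (f i) \<and> c (f i) = i"
  proof (intro ballI bchoice)
    fix j i assume "j \<in> {1..k}" "i \<in> {1..<j}"
    then show "\<exists>u. u \<in> V \<and> E (g j) u \<and> c u = i"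
      using g[rule_format, OF \<open>j \<in> {1..k}\<close>] unfolding grundy_vertex_def by auto
  qed
  from bchoice[OF this] obtain n
    where "\<forall>j\<in>{1..k}. \<forall>i\<in>{1..<j}. n j i \<in> V \<and> E (g j) (n j i) \<and> c (n j i) = i"
    by blast
  with g that show ?thesis by blast
qed

lemma partial_grundy_coloring_pG_atom:
  assumes pg: "partial_grundy_coloring V E c k" and "t \<le> k"
  shows "\<exists>S\<subseteq>V. pG_atom S E t"
proof -
  have proper: "\<forall>u\<in>V. \<forall>v\<in>V. E u v \<longrightarrow> c u \<noteq> c v"
    using pg unfolding partial_grundy_coloring_def proper_coloring_def by auto
  obtain g n where g: "\<And>i. i \<in> {1..k} \<Longrightarrow> g i \<in> V \<and> c (g i) = i"
    and n: "\<And>i j. j \<in> {1..k} \<Longrightarrow> i \<in> {1..<j} \<Longrightarrow> n j i \<in> V \<and> E (g j) (n j i) \<and> c (n j i) = i"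
    using partial_grundy_coloring_witnesses[OF pg] by blast
  define D where "D i = insert (g i) ((\<lambda>j. n j i) ` {i<..t})" for i
  have D: "x \<in> V \<and> c x = i" if "i \<in> {1..t}" "x \<in> D i" for i x
  proof -
    have "i \<in> {1..k}" using that \<open>t \<le> k\<close> by auto
    moreover have "j \<in> {1..k}" "i \<in> {1..<j}" if "j \<in> {i<..t}" for j
      using that \<open>i \<in> {1..t}\<close> \<open>t \<le> k\<close> by auto
    ultimately show ?thesis using \<open>x \<in> D i\<close> g n unfolding D_def by blast
  qed
  have "pG_atom (\<Union>i\<in>{1..t}. D i) E t"
    unfolding pG_atom_def
  proof (intro exI[of _ D] exI[of _ g] conjI)
    show "\<forall>i\<in>{1..t}. \<forall>j\<in>{1..t}. i \<noteq> j \<longrightarrow> D i \<inter> D j = {}"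
      using D by blast
    show "\<forall>i\<in>{1..t}. \<forall>x\<in>D i. \<forall>y\<in>D i. \<not> E x y"
      using D proper by fastforce
    show "\<forall>i\<in>{1..t}. card (D i) \<le> t - i + 1"
    proof
      fix i
      have "card (D i) \<le> Suc (card ((\<lambda>j. n j i) ` {i<..t}))"
        unfolding D_def by (rule card_insert_le_m1) auto
      also have "card ((\<lambda>j. n j i) ` {i<..t}) \<le> card {i<..t}" by (rule card_image_le) auto
      finally show "card (D i) \<le> t - i + 1" by simp
    qed
    show "\<forall>i\<in>{2..t}. \<forall>j\<in>{1..<i}. \<exists>x\<in>D j. E (g i) x"
    proof (intro ballI)
      fix i j assume "i \<in> {2..t}" "j \<in> {1..<i}"
      then have "n i j \<in> D j" "E (g i) (n i j)"
        using n[of i j] \<open>t \<le> k\<close> unfolding D_def by auto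
      then show "\<exists>x\<in>D j. E (g i) x" by blast
    qed
  qed (auto simp: D_def)
  moreover have "(\<Union>i\<in>{1..t}. D i) \<subseteq> V" using D by blast
  ultimately show ?thesis by blast
qed

lemma minimal_pG_atom_exists:
  assumes "finite S" "pG_atom S E t"
  shows "\<exists>S'\<subseteq>S. minimal_pG_atom S' E t"
  using assms
proof (induction S rule: finite_psubset_induct)
  case (psubset A)
  show ?case
  proof (cases "minimal_pG_atom A E t")
    case True
    then show ?thesis by blast
  next
    case False
    then obtain B where "B \<subset> A" "pG_atom B E t"
      using psubset.prems unfolding minimal_pG_atom_def by blast
    then obtain S' where "S' \<subseteq> B" "minimal_pG_atom S' E t" using psubset.IH by blast
    then show ?thesis using \<open>B \<subset> A\<close> by blast
  qed
qed

theorem mainTheorem2: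
  fixes V :: "'a set" and E :: "'a \<Rightarrow> 'a \<Rightarrow> bool" and t :: nat
  assumes "simple_graph V E" and "t \<ge> 1"
  shows "t \<le> partial_grundy_number V E \<longleftrightarrow> (\<exists>S\<subseteq>V. minimal_pG_atom S E t)"
proof
  have "finite V" using assms(1) unfolding simple_graph_def by blast
  assume "t \<le> partial_grundy_number V E"
  then obtain k c where "partial_grundy_coloring V E c k" "t \<le> k"
    using le_partial_grundy_number_iff[OF assms(1)] by blast
  from partial_grundy_coloring_pG_atom[OF this] obtain S where "S \<subseteq> V" "pG_atom S E t"
    by blast
  moreover have "finite S" using \<open>S \<subseteq> V\<close> \<open>finite V\<close> by (rule finite_subset)
  ultimately show "\<exists>S\<subseteq>V. minimal_pG_atom S E t"
    using minimal_pG_atom_exists[of S E t] by blast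
next
  assume "\<exists>S\<subseteq>V. minimal_pG_atom S E t"
  then obtain S where "S \<subseteq> V" "pG_atom S E t" unfolding minimal_pG_atom_def by blast
  from pG_atom_partial_grundy_coloring[OF this(2)] obtain c
    where "partial_grundy_coloring S E c t" by blast
  moreover have "finite (V - S)" using assms(1) unfolding simple_graph_def by blast
  ultimately have "\<exists>k\<ge>t. \<exists>c'. partial_grundy_coloring (S \<union> (V - S)) E c' k"
    using partial_grundy_coloring_Un[OF simple_graph_symp_irreflp[OF assms(1)]] by blast
  then show "t \<le> partial_grundy_number V E"
    unfolding le_partial_grundy_number_iff[OF assms(1)] Un_Diff_cancel Un_absorb1[OF \<open>S \<subseteq> V\<close>] .
qed

end
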